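(* Let $d\ge2$. For all $d$-dimensional copulas $C_1,C_2$, $$D_1(C_1,C_2)\le D_\infty(C_1,C_2)\le 2\,TV(C_1,C_2).$$ In particular, convergence with respect to $TV$ implies convergence with respect to $D_1$ and with respect to $D_\infty$.
   Context: $\mathbb{I}=[0,1]$, $\lambda^k$ is $k$-dimensional Lebesgue measure ($\lambda=\lambda^1$). For a $d$-dimensional copula $C$, $\mu_C$ is its associated probability measure on $\mathbb{I}^d$ and $K_C:\mathbb{I}\times\mathcal{B}(\mathbb{I}^{d-1})\to\mathbb{I}$ is (a version of) its Markov kernel, i.e. the regular conditional distribution of $(U_1,\dots,U_{d-1})$ given $U_d=v$ for $(U_1,\dots,U_d)\sim C$. Define $D_1(C_1,C_2)=\int_{\mathbb{I}^{d-1}}\int_{\mathbb{I}}|K_{C_1}(v,[\mathbf{0},\mathbf{u}])-K_{C_2}(v,[\mathbf{0},\mathbf{u}])|\,d\lambda(v)\,d\lambda^{d-1}(\mathbf{u})$, $D_\infty(C_1,C_2)=\sup_{\mathbf{u}\in\mathbb{I}^{d-1}}\int_{\mathbb{I}}|K_{C_1}(v,[\mathbf{0},\mathbf{u}])-K_{C_2}(v,[\mathbf{0},\mathbf{u}])|\,d\lambda(v)$, $TV(C_1,C_2)=\sup_{G\in\mathcal{B}(\mathbb{I}^d)}|\mu_{C_1}(G)-\mu_{C_2}(G)|$. *)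

theory Defs
  imports "HOL-Probability.Probability"
begin

text \<open>A d-dimensional copula (d = CARD('m) + 1 \<ge> 2) is represented by its associated
probability measure on I^d = I^(d-1) x I; a point of I^d is a pair (u, v) with
u :: real^'m the first d-1 coordinates and v the last coordinate.
Copulas correspond bijectively to Borel probability measures all of whose
one-dimensional marginals are uniform on [0,1] (C(x) = mu([0,x])).\<close>

definition uniform01 :: "real measure" where
  "uniform01 = density lborel (indicator {0..1})"

definition copula_measure :: "((real^'m::finite) \<times> real) measure \<Rightarrow> bool" where
  "copula_measure \<mu> \<longleftrightarrow> prob_space \<mu> \<and> sets \<mu> = sets borel \<and>
     (\<forall>i. distr \<mu> lborel (\<lambda>x. fst x $ i) = uniform01) \<and>
     distr \<mu> lborel snd = uniform01"

text \<open>K is (a version of) the Markov kernel of mu: the regular conditional distribution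
of the first d-1 coordinates given the last coordinate v \<in> I.\<close>

definition markov_kernel_of ::
  "((real^'m::finite) \<times> real) measure \<Rightarrow> (real \<Rightarrow> (real^'m::finite) measure) \<Rightarrow> bool" where
  "markov_kernel_of \<mu> K \<longleftrightarrow>
     (\<forall>v\<in>{0..1}. prob_space (K v) \<and> sets (K v) = sets borel) \<and>
     (\<forall>B\<in>sets borel. (\<lambda>v. measure (K v) B) \<in> borel_measurable (restrict_space borel {0..1})) \<and>
     (\<forall>B\<in>sets borel. \<forall>F\<in>sets borel. F \<subseteq> {0..1} \<longrightarrow>
        measure \<mu> (B \<times> F) = (LINT v:F|lborel. measure (K v) B))"

definition D1 :: "(real \<Rightarrow> (real^'m::finite) measure) \<Rightarrow> (real \<Rightarrow> (real^'m::finite) measure) \<Rightarrow> real" where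
  "D1 K1 K2 = (LINT u:cbox 0 1|lborel.
      (LINT v:{0..1}|lborel. \<bar>measure (K1 v) (cbox 0 u) - measure (K2 v) (cbox 0 u)\<bar>))"

definition Dinf :: "(real \<Rightarrow> (real^'m::finite) measure) \<Rightarrow> (real \<Rightarrow> (real^'m::finite) measure) \<Rightarrow> real" where
  "Dinf K1 K2 = (SUP u\<in>cbox 0 1.
      (LINT v:{0..1}|lborel. \<bar>measure (K1 v) (cbox 0 u) - measure (K2 v) (cbox 0 u)\<bar>))"

definition TV :: "((real^'m::finite) \<times> real) measure \<Rightarrow> ((real^'m::finite) \<times> real) measure \<Rightarrow> real" where
  "TV \<mu>1 \<mu>2 = (SUP G\<in>sets borel. \<bar>measure \<mu>1 G - measure \<mu>2 G\<bar>)"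

end

theory Submission imports Defs begin

text \<open>For a Borel set \<open>B\<close>, the function \<open>v \<mapsto> K\<^sub>1(v,B) - K\<^sub>2(v,B)\<close> integrates over
every Borel \<open>F \<subseteq> [0,1]\<close> to \<open>\<mu>\<^sub>1(B \<times> F) - \<mu>\<^sub>2(B \<times> F)\<close>, which is at most \<open>TV\<close> in
absolute value. Splitting \<open>[0,1]\<close> into the sets where this function is nonnegative and
negative bounds its \<open>L\<^sup>1\<close> norm by \<open>2 TV\<close>; with \<open>B = [0,u]\<close> and the supremum over \<open>u\<close>
this is \<open>D\<^sub>\<infinity> \<le> 2 TV\<close>. \<open>D\<^sub>1\<close> averages the same quantities over the unit cube, which
has volume 1, so it is at most their supremum \<open>D\<^sub>\<infinity>\<close>.\<close>

lemma set_integral_abs_le_twice_bound: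
  fixes g :: "'a \<Rightarrow> real"
  assumes A: "A \<in> sets M" and g: "set_integrable M A g"
    and bound: "\<And>F. F \<in> sets M \<Longrightarrow> F \<subseteq> A \<Longrightarrow> \<bar>LINT x:F|M. g x\<bar> \<le> c"
  shows "(LINT x:A|M. \<bar>g x\<bar>) \<le> 2 * c"
proof -
  define P where "P = g -` {0..} \<inter> A"
  define N where "N = g -` {..<0} \<inter> A"
  have meas: "set_borel_measurable M A g"
    using g by (simp add: set_borel_measurable_def set_integrable_def)
  have P: "P \<in> sets M" and N: "N \<in> sets M"
    unfolding P_def N_def using set_borel_measurable_sets[OF meas _ A] by auto
  have intP: "set_integrable M P g" and intN: "set_integrable M N g"
    using set_integrable_subset[OF g] P N by (auto simp: P_def N_def)
  have "A = P \<union> N" "P \<inter> N = {}"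
    by (auto simp: P_def N_def)
  then have "(LINT x:A|M. \<bar>g x\<bar>) = (LINT x:P|M. \<bar>g x\<bar>) + (LINT x:N|M. \<bar>g x\<bar>)"
    using set_integral_Un set_integrable_abs intP intN by metis
  also have "\<dots> = (LINT x:P|M. g x) - (LINT x:N|M. g x)"
    using set_lebesgue_integral_cong[OF P, of "\<lambda>x. \<bar>g x\<bar>" g]
      set_lebesgue_integral_cong[OF N, of "\<lambda>x. \<bar>g x\<bar>" "\<lambda>x. - g x"]
      set_integral_uminus[OF intN]
    by (simp add: P_def N_def)
  also have "\<dots> \<le> c + c"
    using bound[OF P] bound[OF N] by (auto simp: P_def N_def)
  finally show ?thesis by simp
qed

lemma set_integral_le_measure_mult_bound:
  fixes f :: "'a \<Rightarrow> real"
  assumes S: "S \<in> sets M" "emeasure M S < \<infinity>"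
    and "0 \<le> c" and bound: "\<And>x. x \<in> S \<Longrightarrow> f x \<le> c"
  shows "(LINT x:S|M. f x) \<le> measure M S * c"
proof (cases "set_integrable M S f")
  case True
  have "set_integrable M S (\<lambda>_. c)"
    unfolding set_integrable_def using S by (intro integrableI_bounded_set_indicator) auto
  then have "(LINT x:S|M. f x) \<le> (LINT x:S|M. c)"
    using set_integral_mono[OF True _ bound] by blast
  also have "\<dots> = measure M S * c"
    using S by (simp add: set_integral_const)
  finally show ?thesis .
next
  case False
  \<comment> \<open>then the integral is the junk value 0\<close>
  then show ?thesis
    using \<open>0 \<le> c\<close> by (simp add: set_integrable_def set_lebesgue_integral_def not_integrable_integral_eq)
qed

lemma TV_ge_abs_measure_diff:
  fixes \<mu>1 \<mu>2 :: "((real^'m::finite) \<times> real) measure"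
  assumes "prob_space \<mu>1" "prob_space \<mu>2" "G \<in> sets borel"
  shows "\<bar>measure \<mu>1 G - measure \<mu>2 G\<bar> \<le> TV \<mu>1 \<mu>2"
  unfolding TV_def
proof (rule cSUP_upper)
  show "bdd_above ((\<lambda>G. \<bar>measure \<mu>1 G - measure \<mu>2 G\<bar>) ` sets borel)"
  proof (rule bdd_aboveI2)
    fix G
    have "measure \<mu>1 G \<le> 1" "measure \<mu>2 G \<le> 1"
      using assms by (simp_all add: prob_space.prob_le_1)
    then show "\<bar>measure \<mu>1 G - measure \<mu>2 G\<bar> \<le> 1"
      using measure_nonneg[of \<mu>1 G] measure_nonneg[of \<mu>2 G] by linarith
  qed
qed (use assms in simp)

lemma markov_kernel_set_integrable:
  assumes K: "markov_kernel_of \<mu> K" and B: "B \<in> sets borel"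
  shows "set_integrable lborel {0..1} (\<lambda>v. measure (K v) B)"
proof -
  have "(\<lambda>v. measure (K v) B) \<in> borel_measurable (restrict_space borel {0..1})"
    using assms unfolding markov_kernel_of_def by blast
  then have meas: "(\<lambda>v. indicator {0..1} v * measure (K v) B) \<in> borel_measurable lborel"
    by (simp add: borel_measurable_restrict_space_iff)
  have "measure (K v) B \<le> 1" if "v \<in> {0..1}" for v
    using K that unfolding markov_kernel_of_def by (simp add: prob_space.prob_le_1)
  then have "integrable lborel (\<lambda>v. indicator {0..1} v *\<^sub>R (indicator {0..1} v * measure (K v) B))"
    by (intro integrableI_bounded_set_indicator[where B=1] meas AE_I2) auto
  then show ?thesis
    unfolding set_integrable_def by (simp add: mult.assoc[symmetric] indicator_inter_arith[symmetric])
qed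

lemma markov_kernel_set_integral_diff:
  assumes K1: "markov_kernel_of \<mu>1 K1" and K2: "markov_kernel_of \<mu>2 K2"
    and B: "B \<in> sets borel" and F: "F \<in> sets borel" "F \<subseteq> {0..1}"
  shows "(LINT v:F|lborel. measure (K1 v) B - measure (K2 v) B) =
    measure \<mu>1 (B \<times> F) - measure \<mu>2 (B \<times> F)"
proof -
  have "set_integrable lborel F (\<lambda>v. measure (K1 v) B)"
    and "set_integrable lborel F (\<lambda>v. measure (K2 v) B)"
    using set_integrable_subset[OF markov_kernel_set_integrable[OF K1 B]]
      set_integrable_subset[OF markov_kernel_set_integrable[OF K2 B]] F
    by auto
  then show ?thesis
    using K1 K2 B F by (simp add: markov_kernel_of_def)
qed

lemma kernel_L1_le_2_TV:
  fixes \<mu>1 \<mu>2 :: "((real^'m::finite) \<times> real) measure"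
  assumes "prob_space \<mu>1" "prob_space \<mu>2"
    and K1: "markov_kernel_of \<mu>1 K1" and K2: "markov_kernel_of \<mu>2 K2"
    and B: "B \<in> sets borel"
  shows "(LINT v:{0..1}|lborel. \<bar>measure (K1 v) B - measure (K2 v) B\<bar>) \<le> 2 * TV \<mu>1 \<mu>2"
proof (rule set_integral_abs_le_twice_bound)
  show "set_integrable lborel {0..1} (\<lambda>v. measure (K1 v) B - measure (K2 v) B)"
    using markov_kernel_set_integrable[OF K1 B] markov_kernel_set_integrable[OF K2 B] by auto
  fix F :: "real set"
  assume F: "F \<in> sets lborel" "F \<subseteq> {0..1}"
  have "B \<times> F \<in> sets borel"
    using B F by (simp flip: borel_prod)
  then show "\<bar>LINT v:F|lborel. measure (K1 v) B - measure (K2 v) B\<bar> \<le> TV \<mu>1 \<mu>2"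
    using markov_kernel_set_integral_diff[OF K1 K2 B] TV_ge_abs_measure_diff assms F by simp
qed simp

lemma Dinf_le_2_TV:
  fixes \<mu>1 \<mu>2 :: "((real^'m::finite) \<times> real) measure"
  assumes "prob_space \<mu>1" "prob_space \<mu>2" "markov_kernel_of \<mu>1 K1" "markov_kernel_of \<mu>2 K2"
  shows "Dinf K1 K2 \<le> 2 * TV \<mu>1 \<mu>2"
  unfolding Dinf_def
proof (rule cSUP_least)
  have "(0::real^'m) \<in> cbox 0 1"
    by (simp add: mem_box_cart)
  then show "cbox 0 (1::real^'m) \<noteq> {}"
    by blast
qed (use kernel_L1_le_2_TV[OF assms] in simp)

lemma D1_le_Dinf:
  fixes \<mu>1 \<mu>2 :: "((real^'m::finite) \<times> real) measure"
  assumes "prob_space \<mu>1" "prob_space \<mu>2" "markov_kernel_of \<mu>1 K1" "markov_kernel_of \<mu>2 K2"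
  shows "D1 K1 K2 \<le> Dinf K1 K2"
proof -
  define \<phi> where "\<phi> u = (LINT v:{0..1}|lborel. \<bar>measure (K1 v) (cbox 0 u) - measure (K2 v) (cbox 0 u)\<bar>)"
    for u :: "real^'m"
  have "bdd_above (\<phi> ` cbox 0 1)"
    using kernel_L1_le_2_TV[OF assms] by (intro bdd_aboveI2[where M="2 * TV \<mu>1 \<mu>2"]) (simp add: \<phi>_def)
  then have le_Dinf: "\<phi> u \<le> Dinf K1 K2" if "u \<in> cbox 0 1" for u
    unfolding Dinf_def \<phi>_def[symmetric] using that by (rule cSUP_upper[rotated])
  have zero_in_cube: "0 \<in> cbox 0 (1::real^'m)"
    by (simp add: mem_box_cart)
  then have cube_volume: "measure lborel (cbox 0 (1::real^'m)) = 1"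
    by (subst content_cbox_cart) auto
  have "0 \<le> \<phi> 0"
    unfolding \<phi>_def set_lebesgue_integral_def by simp
  then have "0 \<le> Dinf K1 K2"
    using le_Dinf[OF zero_in_cube] by linarith
  then have "(LINT u:cbox 0 1|lborel. \<phi> u) \<le> measure lborel (cbox 0 (1::real^'m)) * Dinf K1 K2"
    using le_Dinf by (intro set_integral_le_measure_mult_bound emeasure_lborel_cbox_finite) auto
  then show ?thesis
    by (simp add: D1_def \<phi>_def[symmetric] cube_volume)
qed

lemma D1_nonneg: "0 \<le> D1 K1 K2"
  unfolding D1_def set_lebesgue_integral_def by simp

theorem theorem2p3:
  fixes \<mu>1 \<mu>2 :: "((real^'m::finite) \<times> real) measure"
    and K1 K2 :: "real \<Rightarrow> (real^'m::finite) measure"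
  assumes "copula_measure \<mu>1" and "copula_measure \<mu>2"
    and "markov_kernel_of \<mu>1 K1" and "markov_kernel_of \<mu>2 K2"
  shows "(D1 K1 K2 \<le> Dinf K1 K2 \<and> Dinf K1 K2 \<le> 2 * TV \<mu>1 \<mu>2) \<and>
         (\<forall>(\<mu>s :: nat \<Rightarrow> ((real^'m::finite) \<times> real) measure) Ks \<mu> K.
           (\<forall>n. copula_measure (\<mu>s n) \<and> markov_kernel_of (\<mu>s n) (Ks n)) \<longrightarrow>
           copula_measure \<mu> \<longrightarrow> markov_kernel_of \<mu> K \<longrightarrow>
           (\<lambda>n. TV (\<mu>s n) \<mu>) \<longlonglongrightarrow> 0 \<longrightarrow>
           ((\<lambda>n. D1 (Ks n) K) \<longlonglongrightarrow> 0 \<and> (\<lambda>n. Dinf (Ks n) K) \<longlonglongrightarrow> 0))"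
proof (intro conjI allI impI)
  have "prob_space \<mu>1" "prob_space \<mu>2"
    using assms by (simp_all add: copula_measure_def)
  then show "D1 K1 K2 \<le> Dinf K1 K2" "Dinf K1 K2 \<le> 2 * TV \<mu>1 \<mu>2"
    using D1_le_Dinf Dinf_le_2_TV assms by blast+
next
  fix \<mu>s :: "nat \<Rightarrow> ((real^'m::finite) \<times> real) measure" and Ks \<mu> K
  assume seq: "\<forall>n. copula_measure (\<mu>s n) \<and> markov_kernel_of (\<mu>s n) (Ks n)"
    and "copula_measure \<mu>" "markov_kernel_of \<mu> K"
    and TV_lim: "(\<lambda>n. TV (\<mu>s n) \<mu>) \<longlonglongrightarrow> 0"
  then have "prob_space (\<mu>s n)" "prob_space \<mu>" for n
    by (simp_all add: copula_measure_def)
  then have D1_le: "D1 (Ks n) K \<le> Dinf (Ks n) K" and Dinf_le: "Dinf (Ks n) K \<le> 2 * TV (\<mu>s n) \<mu>" for n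
    using D1_le_Dinf Dinf_le_2_TV seq \<open>markov_kernel_of \<mu> K\<close> by blast+
  have lim: "(\<lambda>n. 2 * TV (\<mu>s n) \<mu>) \<longlonglongrightarrow> 0"
    using tendsto_mult_right_zero[OF TV_lim] by simp
  show "(\<lambda>n. Dinf (Ks n) K) \<longlonglongrightarrow> 0" "(\<lambda>n. D1 (Ks n) K) \<longlonglongrightarrow> 0"
    by (rule real_tendsto_sandwich[OF always_eventually always_eventually tendsto_const lim];
        meson D1_nonneg D1_le Dinf_le order_trans)+
qed

end
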